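(* Let $\Lambda\ge1$ and consider any connectivity of $K$ users to $\Lambda$ caches, any demand vector in which the $K$ users request pairwise distinct files, and the associated side information graph $G$. Let $\bm c=(c_1,\dots,c_\Lambda)$ be any permutation of $[\Lambda]$. Let $\mathcal J$ be the set of vertices consisting of: (i) all vertices $W_{d_u,\mathcal T}$, $\mathcal T\subseteq[\Lambda]$, for every user $u$ with $\mathcal U_u=\emptyset$; and (ii) for every user $u$ with $\mathcal U_u\neq\emptyset$, letting $i$ be the unique index such that $c_i\in\mathcal U_u\subseteq\{c_1,\dots,c_i\}$, all vertices $W_{d_u,\mathcal T}$ with $\mathcal T\subseteq[\Lambda]\setminus\{c_1,\dots,c_i\}$. Then the subgraph of $G$ induced by $\mathcal J$ contains no directed cycle.
   Context: Setting: $N$ files $W_1,\dots,W_N$, each partitioned into disjoint subfiles $W_{n,\mathcal T}$ indexed by $\mathcal T\subseteq[\Lambda]$, where $W_{n,\mathcal T}$ is the part stored exactly by the caches in $\mathcal T$. Each user $u$ is connected to the set of caches $\mathcal U_u\subseteq[\Lambda]$ (possibly empty) and requests file $W_{d_u}$, with the $d_u$ pairwise distinct. The side information set of user $u$ is $\{W_{n,\mathcal T}: n\in[N],\ \mathcal T\cap\mathcal U_u\neq\emptyset\}$ and its desired set is $\{W_{d_u,\mathcal T}:\mathcal T\subseteq[\Lambda]\setminus\mathcal U_u\}$. The side information graph $G$ is the directed graph whose vertices are all desired subfiles $W_{d_u,\mathcal T}$ ($u$ a user, $\mathcal T\subseteq[\Lambda]\setminus\mathcal U_u$), with a directed edge from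 a vertex desired by user $p$ to a vertex desired by user $q\ne p$ if and only if the former subfile belongs to the side information set of $q$. *)

theory Defs
  imports Main
begin

text \<open>Caches are [\<Lambda>] = {1..\<Lambda>}, users are [K] = {1..K}, files are [N] = {1..N}.
  A subfile W_{n,T} is represented by the pair (n, T).  U u is the set of caches user u
  is connected to, d u the file user u requests.\<close>

definition side_info :: "nat \<Rightarrow> nat \<Rightarrow> (nat \<Rightarrow> nat set) \<Rightarrow> nat \<Rightarrow> (nat \<times> nat set) set" where
  "side_info N \<Lambda> U u = {(n, T). n \<in> {1..N} \<and> T \<subseteq> {1..\<Lambda>} \<and> T \<inter> U u \<noteq> {}}"

definition desired :: "nat \<Rightarrow> (nat \<Rightarrow> nat set) \<Rightarrow> (nat \<Rightarrow> nat) \<Rightarrow> nat \<Rightarrow> (nat \<times> nat set) set" where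
  "desired \<Lambda> U d u = {(d u, T) | T. T \<subseteq> {1..\<Lambda>} - U u}"

definition sig_vertices :: "nat \<Rightarrow> nat \<Rightarrow> (nat \<Rightarrow> nat set) \<Rightarrow> (nat \<Rightarrow> nat) \<Rightarrow> (nat \<times> nat set) set" where
  "sig_vertices K \<Lambda> U d = (\<Union>u\<in>{1..K}. desired \<Lambda> U d u)"

definition sig_edges :: "nat \<Rightarrow> nat \<Rightarrow> nat \<Rightarrow> (nat \<Rightarrow> nat set) \<Rightarrow> (nat \<Rightarrow> nat)
    \<Rightarrow> ((nat \<times> nat set) \<times> (nat \<times> nat set)) set" where
  "sig_edges N K \<Lambda> U d = {(x, y) | x y p q. p \<in> {1..K} \<and> q \<in> {1..K} \<and> p \<noteq> q \<and>
      x \<in> desired \<Lambda> U d p \<and> y \<in> desired \<Lambda> U d q \<and> x \<in> side_info N \<Lambda> U q}"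

definition J_set :: "nat \<Rightarrow> nat \<Rightarrow> (nat \<Rightarrow> nat set) \<Rightarrow> (nat \<Rightarrow> nat) \<Rightarrow> (nat \<Rightarrow> nat)
    \<Rightarrow> (nat \<times> nat set) set" where
  "J_set K \<Lambda> U d c =
     {(d u, T) | u T. u \<in> {1..K} \<and> U u = {} \<and> T \<subseteq> {1..\<Lambda>}}
   \<union> {(d u, T) | u T i. u \<in> {1..K} \<and> U u \<noteq> {} \<and> i \<in> {1..\<Lambda>} \<and> c i \<in> U u \<and>
        U u \<subseteq> c ` {1..i} \<and> T \<subseteq> {1..\<Lambda>} - c ` {1..i}}"

end

theory Submission
  imports Defs
begin

text \<open>Order the users by the position in \<open>c\<close> of the last cache they are connected to
  (position 0 for users without caches). A vertex of \<open>J\<close> desired by a user of position \<open>i\<close>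
  avoids the caches \<open>c\<^sub>1, \<dots>, c\<^sub>i\<close>, whereas the side information of a user of position \<open>j\<close>
  consists of subfiles stored in one of \<open>c\<^sub>1, \<dots>, c\<^sub>j\<close>. Hence every edge inside \<open>J\<close> goes
  from a user to one of strictly larger position, and there is no cycle.\<close>

definition last_position :: "(nat \<Rightarrow> nat) \<Rightarrow> nat \<Rightarrow> nat set \<Rightarrow> nat" where
  "last_position c \<Lambda> A = Sup {i \<in> {1..\<Lambda>}. c i \<in> A}"

lemma last_position_empty [simp]: "last_position c \<Lambda> {} = 0"
  by (simp add: last_position_def)

lemma last_position_eqI:
  assumes inj: "inj_on c {1..\<Lambda>}" and i: "i \<in> {1..\<Lambda>}" "c i \<in> A" "A \<subseteq> c ` {1..i}"
  shows "last_position c \<Lambda> A = i"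
  unfolding last_position_def
proof (rule cSup_eq_maximum)
  show "i \<in> {i \<in> {1..\<Lambda>}. c i \<in> A}" using i by simp
next
  fix j assume "j \<in> {j \<in> {1..\<Lambda>}. c j \<in> A}"
  then obtain k where "k \<in> {1..i}" "c j = c k" "j \<in> {1..\<Lambda>}"
    using i(3) by blast
  with inj i(1) have "j = k"
    by (metis inj_onD atLeastAtMost_iff order_trans)
  with \<open>k \<in> {1..i}\<close> show "j \<le> i" by simp
qed

lemma J_set_avoids_last_position:
  assumes inj_d: "inj_on d {1..K}" and inj_c: "inj_on c {1..\<Lambda>}"
    and u: "u \<in> {1..K}" and J: "(d u, T) \<in> J_set K \<Lambda> U d c"
  defines "i \<equiv> last_position c \<Lambda> (U u)"
  shows "U u \<subseteq> c ` {1..i}" and "T \<inter> c ` {1..i} = {}"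
proof -
  obtain v where v: "v \<in> {1..K}" "d v = d u" and
    witness: "U v = {} \<or> (\<exists>i. i \<in> {1..\<Lambda>} \<and> c i \<in> U v \<and> U v \<subseteq> c ` {1..i}
                               \<and> T \<subseteq> {1..\<Lambda>} - c ` {1..i})"
    using J unfolding J_set_def by fastforce
  have "v = u" using inj_onD[OF inj_d v(2) v(1) u] .
  have "U u \<subseteq> c ` {1..i} \<and> T \<inter> c ` {1..i} = {}"
  proof (cases "U u = {}")
    case True
    then show ?thesis by (simp add: i_def)
  next
    case False
    with witness \<open>v = u\<close> obtain j where j: "j \<in> {1..\<Lambda>}" "c j \<in> U u" "U u \<subseteq> c ` {1..j}"
      "T \<subseteq> {1..\<Lambda>} - c ` {1..j}"
      by blast
    then have "i = j" unfolding i_def using last_position_eqI[OF inj_c] by blast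
    with j show ?thesis by blast
  qed
  then show "U u \<subseteq> c ` {1..i}" and "T \<inter> c ` {1..i} = {}" by simp_all
qed

lemma J_edge_increases_last_position:
  assumes inj_d: "inj_on d {1..K}" and inj_c: "inj_on c {1..\<Lambda>}"
    and p: "p \<in> {1..K}" and q: "q \<in> {1..K}"
    and x: "(d p, T) \<in> J_set K \<Lambda> U d c" and y: "(d q, T') \<in> J_set K \<Lambda> U d c"
    and side: "(d p, T) \<in> side_info N \<Lambda> U q"
  shows "last_position c \<Lambda> (U p) < last_position c \<Lambda> (U q)"
proof -
  from side obtain e where "e \<in> T" "e \<in> U q"
    unfolding side_info_def by blast
  moreover note J_set_avoids_last_position[OF inj_d inj_c q y]
    J_set_avoids_last_position[OF inj_d inj_c p x]
  ultimately obtain j where "j \<in> {1..last_position c \<Lambda> (U q)}"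
    and "j \<notin> {1..last_position c \<Lambda> (U p)}"
    by blast
  then show ?thesis by simp
qed

theorem lemma2:
  fixes N K \<Lambda> :: nat and U :: "nat \<Rightarrow> nat set" and d c :: "nat \<Rightarrow> nat"
  assumes "\<Lambda> \<ge> 1"
    and "\<forall>u\<in>{1..K}. U u \<subseteq> {1..\<Lambda>}"
    and "\<forall>u\<in>{1..K}. d u \<in> {1..N}"
    and "inj_on d {1..K}"
    and "bij_betw c {1..\<Lambda>} {1..\<Lambda>}"
  shows "acyclic (sig_edges N K \<Lambda> U d \<inter> (J_set K \<Lambda> U d c \<times> J_set K \<Lambda> U d c))"
proof -
  have inj_c: "inj_on c {1..\<Lambda>}" using assms(5) by (simp add: bij_betw_def)
  define level where
    "level x = last_position c \<Lambda> (U (the_inv_into {1..K} d (fst x)))" for x :: "nat \<times> nat set"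
  have level: "level (d u, T) = last_position c \<Lambda> (U u)" if "u \<in> {1..K}" for u T
    using the_inv_into_f_f[OF assms(4) that] by (simp add: level_def)
  have "level x < level y"
    if "(x, y) \<in> sig_edges N K \<Lambda> U d" "x \<in> J_set K \<Lambda> U d c" "y \<in> J_set K \<Lambda> U d c" for x y
    using that unfolding sig_edges_def desired_def
    by (auto simp: level intro!: J_edge_increases_last_position[OF assms(4) inj_c])
  then have "acyclic ((sig_edges N K \<Lambda> U d \<inter> (J_set K \<Lambda> U d c \<times> J_set K \<Lambda> U d c))\<inverse>)"
    by (intro acyclicI_order[where f = level]) blast
  then show ?thesis by simp
qed

end
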